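(* Assume (A1) and $\beta<0$. Let $d_1(x,y)=\|x-y\|_\alpha$ and $c=\min\{\alpha^{-1},|\beta|\}$. Then for all $\mu,\nu\in\mathcal{P}$ and all $t\ge0$, $$\mathcal{W}_{d_1}(\mu p_t,\nu p_t)\le e^{-ct}\,\mathcal{W}_{d_1}(\mu,\nu).$$
   Context: Let $(\mathbb{H},\langle\cdot,\cdot\rangle,\|\cdot\|)$ be a separable real Hilbert space and $\mathcal{G}:\mathbb{H}\to\mathbb{H}$ a trace-class, symmetric, non-negative operator. Let $(e_k)_{k\ge1}$ be an orthonormal basis of $\mathbb{H}$ with $\mathcal{G}e_k=\lambda_ke_k$, $\lambda_k\ge0$, $\sum_k\lambda_k<\infty$. A $\mathcal{G}$-Wiener process is $W_t=\sum_k\sqrt{\lambda_k}B^k_t e_k$ with independent standard real Brownian motions $(B^k)$. Let $b:\mathbb{H}\to\mathbb{H}$ be Lipschitz and consider the SDE $dX_t=-X_t\,dt+b(X_t)\,dt+\sqrt2\,dW_t$, $X_0=x\in\mathbb{H}$, which has a unique strong continuous non-explosive solution; $(p_t)_{t\ge0}$ denote its Markov transition kernels and $\mu p_t(dx)=\int p_t(y,dx)\,\mu(dy)$. Fix $n\in\mathbb{N}_+$, let $\mathbb{H}^l=\mathrm{span}\{e_1,\dots,e_n\}$, $\mathbb{H}^h$ its orthogonal complement, $x^l,x^h$ the orthogonal projections, $b^l(x)=(b(x))^l$, $b^h(x)=(b(x))^h$. Assumption (A1): there are constants $0\le H_h<1$, $L_l,L_h,H_l\ge0$ with $\|b^h(x)-b^h(y)\|\le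 H_l\|x^l-y^l\|+H_h\|x^h-y^h\|$ and $\|b^l(x)-b^l(y)\|\le L_l\|x^l-y^l\|+L_h\|x^h-y^h\|$ for all $x,y\in\mathbb{H}$. Set $\alpha=\frac{1+L_h}{1-H_h}$, $\beta=\alpha H_l+L_l-1$, $\|x\|_\alpha=\|x^l\|+\alpha\|x^h\|$. For a continuous $d:\mathbb{H}\times\mathbb{H}\to[0,\infty)$ and Borel probability measures $\mu,\nu$, $\mathcal{W}_d(\mu,\nu)=\inf_\gamma\int d(x,y)\,\gamma(dx\,dy)$, the infimum over all couplings $\gamma$ of $\mu,\nu$. $\mathcal{P}$ is the set of Borel probability measures on $\mathbb{H}$ with finite first moment. *)

theory Defs
  imports "HOL-Probability.Probability"
begin

text \<open>Orthonormal basis indexed by nat (index k here corresponds to e_{k+1} of the paper).\<close>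
definition orthonormal_basis :: "(nat \<Rightarrow> 'a::{real_inner,complete_space}) \<Rightarrow> bool" where
  "orthonormal_basis e \<longleftrightarrow>
     (\<forall>i j. inner (e i) (e j) = (if i = j then 1 else 0)) \<and> closure (span (range e)) = UNIV"

definition std_BM :: "'w measure \<Rightarrow> (real \<Rightarrow> 'w \<Rightarrow> real) \<Rightarrow> bool" where
  "std_BM M X \<longleftrightarrow>
     (\<forall>t\<ge>0. X t \<in> borel_measurable M) \<and>
     (\<forall>\<omega>\<in>space M. X 0 \<omega> = 0) \<and>
     (\<forall>\<omega>\<in>space M. continuous_on {0..} (\<lambda>t. X t \<omega>)) \<and>
     (\<forall>s t. 0 \<le> s \<and> s < t \<longrightarrow>
        distributed M lborel (\<lambda>\<omega>. X t \<omega> - X s \<omega>) (normal_density 0 (sqrt (t - s)))) \<and>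
     (\<forall>ts::real list. sorted ts \<and> ts \<noteq> [] \<and> 0 \<le> hd ts \<longrightarrow>
        prob_space.indep_vars M (\<lambda>_. borel) (\<lambda>i \<omega>. X (ts ! Suc i) \<omega> - X (ts ! i) \<omega>) {..<length ts - 1})"

definition indep_BMs :: "'w measure \<Rightarrow> (nat \<Rightarrow> real \<Rightarrow> 'w \<Rightarrow> real) \<Rightarrow> bool" where
  "indep_BMs M B \<longleftrightarrow> prob_space M \<and> (\<forall>k. std_BM M (B k)) \<and>
     prob_space.indep_vars M (\<lambda>_. Pi\<^sub>M UNIV (\<lambda>_. borel)) (\<lambda>k \<omega>. \<lambda>t. B k t \<omega>) UNIV"

definition G_wiener :: "(nat \<Rightarrow> real) \<Rightarrow> (nat \<Rightarrow> 'a::{real_inner,complete_space})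
     \<Rightarrow> (nat \<Rightarrow> real \<Rightarrow> 'w \<Rightarrow> real) \<Rightarrow> real \<Rightarrow> 'w \<Rightarrow> 'a" where
  "G_wiener lam e B t \<omega> = (\<Sum>k. (sqrt (lam k) * B k t \<omega>) *\<^sub>R e k)"

text \<open>X is a continuous (strong) solution of dX = -X dt + b(X) dt + sqrt 2 dW, X_0 = x,
  written in integral form (the noise is additive).\<close>
definition is_solution :: "'w measure \<Rightarrow> ('a::{real_inner,complete_space} \<Rightarrow> 'a)
     \<Rightarrow> (real \<Rightarrow> 'w \<Rightarrow> 'a) \<Rightarrow> 'a \<Rightarrow> (real \<Rightarrow> 'w \<Rightarrow> 'a) \<Rightarrow> bool" where
  "is_solution M b W x X \<longleftrightarrow>
     (\<forall>t\<ge>0. X t \<in> borel_measurable M) \<and>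
     (AE \<omega> in M. continuous_on {0..} (\<lambda>t. X t \<omega>) \<and>
        (\<forall>t\<ge>0. X t \<omega> = x + integral {0..t} (\<lambda>s. - X s \<omega> + b (X s \<omega>)) + sqrt 2 *\<^sub>R W t \<omega>))"

text \<open>Transition kernel p_t(x, A) = P(X^x_t \<in> A), X y = solution started at y.\<close>
definition trans_kernel :: "'w measure \<Rightarrow> ('a \<Rightarrow> real \<Rightarrow> 'w \<Rightarrow> 'a) \<Rightarrow> real \<Rightarrow> 'a \<Rightarrow> 'a set \<Rightarrow> ennreal" where
  "trans_kernel M X t y A = emeasure M {\<omega> \<in> space M. X y t \<omega> \<in> A}"

definition kernel_act :: "'w measure \<Rightarrow> ('a::topological_space \<Rightarrow> real \<Rightarrow> 'w \<Rightarrow> 'a) \<Rightarrow> real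
     \<Rightarrow> 'a measure \<Rightarrow> 'a measure" where
  "kernel_act M X t \<mu> = measure_of UNIV (sets borel) (\<lambda>A. \<integral>\<^sup>+ y. trans_kernel M X t y A \<partial>\<mu>)"

definition borel_probs :: "('a::topological_space) measure set" where
  "borel_probs = {\<mu>. prob_space \<mu> \<and> sets \<mu> = sets borel}"

definition P1 :: "('a::real_normed_vector) measure set" where
  "P1 = {\<mu>. \<mu> \<in> borel_probs \<and> (\<integral>\<^sup>+ x. ennreal (norm x) \<partial>\<mu>) < \<infinity>}"

definition couplings :: "'a::topological_space measure \<Rightarrow> 'a measure \<Rightarrow> ('a \<times> 'a) measure set" where
  "couplings \<mu> \<nu> = {\<gamma>. \<gamma> \<in> borel_probs \<and> distr \<gamma> borel fst = \<mu> \<and> distr \<gamma> borel snd = \<nu>}"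

definition wasserstein :: "('a::topological_space \<Rightarrow> 'a \<Rightarrow> real) \<Rightarrow> 'a measure \<Rightarrow> 'a measure \<Rightarrow> ennreal" where
  "wasserstein d \<mu> \<nu> = (INF \<gamma> \<in> couplings \<mu> \<nu>. \<integral>\<^sup>+ z. ennreal (d (fst z) (snd z)) \<partial>\<gamma>)"

text \<open>Projection onto span{e_1,...,e_n} (indices 0..n-1 here).\<close>
definition low_proj :: "(nat \<Rightarrow> 'a::real_inner) \<Rightarrow> nat \<Rightarrow> 'a \<Rightarrow> 'a" where
  "low_proj e n x = (\<Sum>k<n. inner x (e k) *\<^sub>R e k)"

definition high_proj :: "(nat \<Rightarrow> 'a::real_inner) \<Rightarrow> nat \<Rightarrow> 'a \<Rightarrow> 'a" where
  "high_proj e n x = x - low_proj e n x"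

definition alpha_norm :: "(nat \<Rightarrow> 'a::real_inner) \<Rightarrow> nat \<Rightarrow> real \<Rightarrow> 'a \<Rightarrow> real" where
  "alpha_norm e n \<alpha> x = norm (low_proj e n x) + \<alpha> * norm (high_proj e n x)"

end

theory Submission
  imports Defs
begin

text \<open>Couple the solutions started at x and y synchronously, i.e. drive both by the same noise.
  The additive noise cancels in the difference D, which solves D' = - D + b(X^x) - b(X^y) pathwise.
  By variation of constants and (A1), the weighted norm V = \<parallel>D^l\<parallel> + \<alpha> \<parallel>D^h\<parallel> satisfies
  exp s V(s) \<le> V(0) + (1 - c) \<integral>[0,s] exp r V(r) dr, and Gronwall's inequality gives
  V(t) \<le> exp (- c t) V(0) almost surely. Pushing a coupling of \<mu> and \<nu> forward along
  (x, y) \<mapsto> (X^x_t, X^y_t) yields a coupling of \<mu> p_t and \<nu> p_t whose cost is at most exp (- c t)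
  times the original one. The push-forward requires a jointly measurable version of
  (x, \<omega>) \<mapsto> X^x_t(\<omega>), which exists since this field is almost surely Lipschitz in x.\<close>

section \<open>Integration in complete normed spaces\<close>

text \<open>The Henstock--Kurzweil library works with the sort \<open>banach\<close>, of which
  \<open>{real_normed_vector, complete_space}\<close> is not a subsort; its results are transported
  through an isometric copy of the space.\<close>

typedef ('a::"{real_normed_vector,complete_space}") banach_copy = "UNIV :: 'a set"
  morphisms of_copy to_copy by auto

setup_lifting type_definition_banach_copy

instantiation banach_copy :: ("{real_normed_vector,complete_space}") real_normed_vector
begin
lift_definition zero_banach_copy :: "'a banach_copy" is 0 .
lift_definition plus_banach_copy :: "'a banach_copy \<Rightarrow> 'a banach_copy \<Rightarrow> 'a banach_copy" is "(+)" .
lift_definition minus_banach_copy :: "'a banach_copy \<Rightarrow> 'a banach_copy \<Rightarrow> 'a banach_copy" is "(-)" .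
lift_definition uminus_banach_copy :: "'a banach_copy \<Rightarrow> 'a banach_copy" is uminus .
lift_definition scaleR_banach_copy :: "real \<Rightarrow> 'a banach_copy \<Rightarrow> 'a banach_copy" is scaleR .
lift_definition norm_banach_copy :: "'a banach_copy \<Rightarrow> real" is norm .
lift_definition sgn_banach_copy :: "'a banach_copy \<Rightarrow> 'a banach_copy" is sgn .
lift_definition dist_banach_copy :: "'a banach_copy \<Rightarrow> 'a banach_copy \<Rightarrow> real" is dist .
definition uniformity_banach_copy :: "('a banach_copy \<times> 'a banach_copy) filter" where
  "uniformity_banach_copy = (INF e\<in>{0<..}. principal {(x, y). dist x y < e})"
definition open_banach_copy :: "'a banach_copy set \<Rightarrow> bool" where
  "open_banach_copy U = (\<forall>x\<in>U. eventually (\<lambda>(x', y). x' = x \<longrightarrow> y \<in> U) uniformity)"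
instance
  by standard (transfer; simp add: algebra_simps dist_norm sgn_div_norm norm_triangle_ineq
      uniformity_banach_copy_def open_banach_copy_def)+
end

lemma bounded_linear_of_copy: "bounded_linear of_copy"
  by (rule bounded_linear_intro[where K=1]; transfer; simp)

lemma bounded_linear_to_copy: "bounded_linear to_copy"
  by (rule bounded_linear_intro[where K=1]; transfer; simp)

lemma norm_to_copy [simp]: "norm (to_copy x) = norm x"
  by transfer simp

instance banach_copy :: ("{real_normed_vector,complete_space}") banach
proof
  fix X :: "nat \<Rightarrow> 'a banach_copy"
  assume "Cauchy X"
  then have "Cauchy (\<lambda>n. of_copy (X n))"
    by (rule bounded_linear.Cauchy[OF bounded_linear_of_copy])
  then obtain L where "(\<lambda>n. of_copy (X n)) \<longlonglongrightarrow> L"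
    by (auto simp: Cauchy_convergent_iff convergent_def)
  from bounded_linear.tendsto[OF bounded_linear_to_copy this] show "convergent X"
    by (auto simp: convergent_def of_copy_inverse)
qed

lemma has_integral_to_copy_iff:
  "((\<lambda>x. to_copy (f x)) has_integral to_copy I) S \<longleftrightarrow> (f has_integral I) S"
  using has_integral_linear[OF _ bounded_linear_to_copy, of f I S]
    has_integral_linear[OF _ bounded_linear_of_copy, of "\<lambda>x. to_copy (f x)" "to_copy I" S]
  by (auto simp: o_def to_copy_inverse)

lemma integrable_continuous_interval_complete:
  fixes f :: "'b::ordered_euclidean_space \<Rightarrow> 'a::{real_normed_vector,complete_space}"
  assumes "continuous_on {a..b} f"
  shows "f integrable_on {a..b}"
proof -
  have "(\<lambda>x. to_copy (f x)) integrable_on {a..b}"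
    by (intro integrable_continuous_interval continuous_on_compose2[OF
          bounded_linear.continuous_on[OF bounded_linear_to_copy continuous_on_id] assms]) auto
  then obtain I where "((\<lambda>x. to_copy (f x)) has_integral to_copy I) {a..b}"
    by (metis integrable_on_def of_copy_inverse)
  then show ?thesis
    by (auto simp: has_integral_to_copy_iff)
qed

lemma integral_norm_bound_integral_complete:
  fixes f :: "'n::euclidean_space \<Rightarrow> 'a::{real_normed_vector,complete_space}"
  assumes f: "f integrable_on S" and g: "g integrable_on S"
    and le: "\<And>x. x \<in> S \<Longrightarrow> norm (f x) \<le> g x"
  shows "norm (integral S f) \<le> integral S g"
proof -
  have "((\<lambda>x. to_copy (f x)) has_integral to_copy (integral S f)) S"
    using f by (simp add: has_integral_to_copy_iff integrable_integral)
  then have "norm (integral S f) = norm (integral S (\<lambda>x. to_copy (f x)))"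
    by (simp add: integral_unique)
  also have "\<dots> \<le> integral S g"
    using \<open>((\<lambda>x. to_copy (f x)) has_integral _) S\<close> g le
    by (intro integral_norm_bound_integral) auto
  finally show ?thesis .
qed

lemma integral_has_vector_derivative_complete:
  fixes f :: "real \<Rightarrow> 'a::{real_normed_vector,complete_space}"
  assumes f: "continuous_on {a..b} f" and x: "x \<in> {a..b}"
  shows "((\<lambda>u. integral {a..u} f) has_vector_derivative f x) (at x within {a..b})"
proof -
  have "((\<lambda>u. integral {a..u} (\<lambda>r. to_copy (f r))) has_vector_derivative to_copy (f x))
      (at x within {a..b})"
    by (intro integral_has_vector_derivative x continuous_on_compose2[OF
          bounded_linear.continuous_on[OF bounded_linear_to_copy continuous_on_id] f]) auto
  from bounded_linear.has_vector_derivative[OF bounded_linear_of_copy this]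
  have "((\<lambda>u. of_copy (integral {a..u} (\<lambda>r. to_copy (f r)))) has_vector_derivative f x)
      (at x within {a..b})"
    by (simp add: to_copy_inverse)
  moreover have "integral {a..u} f = of_copy (integral {a..u} (\<lambda>r. to_copy (f r)))"
    if "u \<in> {a..b}" for u
  proof -
    have "f integrable_on {a..u}"
      using that by (intro integrable_continuous_interval_complete continuous_on_subset[OF f]) auto
    then have "((\<lambda>r. to_copy (f r)) has_integral to_copy (integral {a..u} f)) {a..u}"
      by (simp add: has_integral_to_copy_iff integrable_integral)
    then show ?thesis
      by (simp add: integral_unique to_copy_inverse)
  qed
  ultimately show ?thesis
    by (rule has_vector_derivative_transform[OF x, rotated])
qed

lemma fundamental_theorem_of_calculus_complete:
  fixes f :: "real \<Rightarrow> 'a::{real_normed_vector,complete_space}"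
  assumes "a \<le> b"
    and "\<And>x. x \<in> {a..b} \<Longrightarrow> (f has_vector_derivative f' x) (at x within {a..b})"
  shows "(f' has_integral (f b - f a)) {a..b}"
proof -
  have "((\<lambda>x. to_copy (f' x)) has_integral (to_copy (f b) - to_copy (f a))) {a..b}"
    using assms bounded_linear.has_vector_derivative[OF bounded_linear_to_copy]
    by (intro fundamental_theorem_of_calculus) auto
  then show ?thesis
    by (simp add: has_integral_to_copy_iff flip: linear_diff[OF bounded_linear.linear[OF bounded_linear_to_copy]])
qed

lemma variation_of_constants:
  fixes D g :: "real \<Rightarrow> 'a::{real_normed_vector,complete_space}"
  assumes T: "T \<ge> 0" and cD: "continuous_on {0..T} D" and cg: "continuous_on {0..T} g"
    and eq: "\<And>s. s \<in> {0..T} \<Longrightarrow> D s = D 0 + integral {0..s} (\<lambda>r. - D r + g r)"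
  shows "exp T *\<^sub>R D T = D 0 + integral {0..T} (\<lambda>r. exp r *\<^sub>R g r)"
proof -
  have cf: "continuous_on {0..T} (\<lambda>r. - D r + g r)"
    by (intro continuous_intros cD cg)
  have dD: "(D has_vector_derivative (- D s + g s)) (at s within {0..T})" if s: "s \<in> {0..T}" for s
  proof -
    have "((\<lambda>u. D 0 + integral {0..u} (\<lambda>r. - D r + g r)) has_vector_derivative (- D s + g s))
        (at s within {0..T})"
      using has_vector_derivative_add[OF has_vector_derivative_const
          integral_has_vector_derivative_complete[OF cf s]]
      by (simp only: add_0_left)
    then show ?thesis
      by (rule has_vector_derivative_transform[OF s, rotated]) (rule eq)
  qed
  have "((\<lambda>r. exp r *\<^sub>R D r) has_vector_derivative (exp s *\<^sub>R g s)) (at s within {0..T})"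
    if s: "s \<in> {0..T}" for s
    using has_vector_derivative_scaleR[OF DERIV_exp[THEN has_field_derivative_at_within] dD[OF s]]
    by (simp add: algebra_simps)
  from fundamental_theorem_of_calculus_complete[OF T this]
  have "integral {0..T} (\<lambda>r. exp r *\<^sub>R g r) = exp T *\<^sub>R D T - D 0"
    by (simp add: integral_unique)
  then show ?thesis
    by simp
qed

section \<open>Pathwise contraction\<close>

lemma gronwall_inequality:
  fixes W :: "real \<Rightarrow> real"
  assumes T: "T \<ge> 0" and k: "k \<ge> 0" and cW: "continuous_on {0..T} W"
    and le: "\<And>s. s \<in> {0..T} \<Longrightarrow> W s \<le> a + k * integral {0..s} W"
  shows "W T \<le> a * exp (k * T)"
proof -
  define \<Phi> where "\<Phi> s = integral {0..s} W" for s
  define h where "h s = exp (- k * s) * (a + k * \<Phi> s)" for s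
  have ch: "continuous_on {0..T} h"
    unfolding h_def \<Phi>_def
    by (intro continuous_intros indefinite_integral_continuous_1 integrable_continuous_interval cW)
  have "h T \<le> h 0"
  proof (rule DERIV_nonpos_imp_decreasing_open[OF T _ ch])
    fix s assume s: "0 < s" "s < T"
    have "(\<Phi> has_vector_derivative W s) (at s within {0<..<T})"
      using integral_has_vector_derivative[OF cW, of s] s unfolding \<Phi>_def
      by (auto intro: has_vector_derivative_within_subset)
    then have "(\<Phi> has_vector_derivative W s) (at s)"
      using s has_vector_derivative_within_open[of s "{0<..<T}"] by auto
    then have "(\<Phi> has_real_derivative W s) (at s)"
      by (simp add: has_real_derivative_iff_has_vector_derivative)
    then have "(h has_real_derivative k * exp (- k * s) * (W s - (a + k * \<Phi> s))) (at s)"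
      unfolding h_def by (auto intro!: derivative_eq_intros simp: algebra_simps)
    moreover have "W s - (a + k * \<Phi> s) \<le> 0"
      using le[of s] s unfolding \<Phi>_def by auto
    ultimately show "\<exists>y. DERIV h s :> y \<and> y \<le> 0"
      using k by (intro exI conjI) (auto intro: mult_nonneg_nonpos)
  qed
  then have "exp (- k * T) * (a + k * \<Phi> T) \<le> a"
    by (simp add: h_def \<Phi>_def)
  then have "a + k * \<Phi> T \<le> a * exp (k * T)"
    by (simp add: exp_minus field_simps)
  then show ?thesis
    using le[of T] T unfolding \<Phi>_def by auto
qed

lemma exp_norm_bounded_linear_le:
  fixes P :: "'a::{real_normed_vector,complete_space} \<Rightarrow> 'b::{real_normed_vector,complete_space}"
    and D g :: "real \<Rightarrow> 'a"
  assumes P: "bounded_linear P" and cg: "continuous_on {0..s} g"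
    and vc: "exp s *\<^sub>R D s = D 0 + integral {0..s} (\<lambda>r. exp r *\<^sub>R g r)"
  shows "exp s * norm (P (D s)) \<le> norm (P (D 0)) + integral {0..s} (\<lambda>r. exp r * norm (P (g r)))"
proof -
  interpret P: bounded_linear P by fact
  have cPg: "continuous_on {0..s} (\<lambda>r. exp r *\<^sub>R P (g r))"
    by (intro continuous_intros continuous_on_compose2[OF P.continuous_on[OF continuous_on_id] cg]) auto
  have "(\<lambda>r. exp r *\<^sub>R g r) integrable_on {0..s}"
    by (intro integrable_continuous_interval_complete continuous_intros cg)
  from integral_linear[OF this P]
  have "exp s *\<^sub>R P (D s) = P (D 0) + integral {0..s} (\<lambda>r. exp r *\<^sub>R P (g r))"
    by (simp add: o_def P.scaleR flip: P.add vc)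
  then have "exp s * norm (P (D s)) \<le> norm (P (D 0)) + norm (integral {0..s} (\<lambda>r. exp r *\<^sub>R P (g r)))"
    by (metis abs_exp_cancel norm_scaleR norm_triangle_ineq)
  also have "norm (integral {0..s} (\<lambda>r. exp r *\<^sub>R P (g r))) \<le> integral {0..s} (\<lambda>r. exp r * norm (P (g r)))"
    using cPg continuous_on_norm[OF cPg]
    by (intro integral_norm_bound_integral_complete integrable_continuous_interval_complete
        integrable_continuous_interval) auto
  finally show ?thesis
    by simp
qed

lemma additive_noise_solution_diff:
  fixes b :: "'a::{real_normed_vector,complete_space} \<Rightarrow> 'a" and Y Z w :: "real \<Rightarrow> 'a"
  assumes cb: "continuous_on UNIV b" and s: "s \<ge> 0"
    and c1: "continuous_on {0..s} Y" and c2: "continuous_on {0..s} Z"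
    and e1: "Y s = y + integral {0..s} (\<lambda>r. - Y r + b (Y r)) + w s"
    and e2: "Z s = z + integral {0..s} (\<lambda>r. - Z r + b (Z r)) + w s"
  shows "Y s - Z s = y - z + integral {0..s} (\<lambda>r. - (Y r - Z r) + (b (Y r) - b (Z r)))"
proof -
  have int: "(\<lambda>r. - X r + b (X r)) integrable_on {0..s}" if "continuous_on {0..s} X" for X
    by (intro integrable_continuous_interval_complete continuous_intros that
        continuous_on_compose2[OF cb that]) auto
  from integral_diff[OF int[OF c1] int[OF c2]] show ?thesis
    by (simp add: e1 e2 algebra_simps)
qed

lemma exp_weighted_norm_le:
  fixes P :: "'a::{real_normed_vector,complete_space} \<Rightarrow> 'b::{real_normed_vector,complete_space}"
    and Q :: "'a \<Rightarrow> 'c::{real_normed_vector,complete_space}"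
    and D g :: "real \<Rightarrow> 'a"
  assumes P: "bounded_linear P" and Q: "bounded_linear Q" and \<alpha>: "0 \<le> \<alpha>"
    and cD: "continuous_on {0..s} D" and cg: "continuous_on {0..s} g"
    and vc: "exp s *\<^sub>R D s = D 0 + integral {0..s} (\<lambda>r. exp r *\<^sub>R g r)"
    and forcing: "\<And>r. norm (P (g r)) + \<alpha> * norm (Q (g r)) \<le> \<kappa> * (norm (P (D r)) + \<alpha> * norm (Q (D r)))"
  defines "V \<equiv> \<lambda>r. norm (P (D r)) + \<alpha> * norm (Q (D r))"
  shows "exp s * V s \<le> V 0 + \<kappa> * integral {0..s} (\<lambda>r. exp r * V r)"
proof -
  have cont: "continuous_on {0..s} (\<lambda>r. norm (R (f r)))"
    if "bounded_linear R" "continuous_on {0..s} f" for R :: "'a \<Rightarrow> 'd::real_normed_vector" and f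
    by (intro continuous_on_norm continuous_on_compose2[OF
          bounded_linear.continuous_on[OF that(1) continuous_on_id] that(2)]) auto
  define IP where "IP = integral {0..s} (\<lambda>r. exp r * norm (P (g r)))"
  define IQ where "IQ = integral {0..s} (\<lambda>r. exp r * norm (Q (g r)))"
  have "exp s * V s = exp s * norm (P (D s)) + \<alpha> * (exp s * norm (Q (D s)))"
    by (simp add: V_def algebra_simps)
  also have "\<dots> \<le> (norm (P (D 0)) + IP) + \<alpha> * (norm (Q (D 0)) + IQ)"
    unfolding IP_def IQ_def
    by (intro add_mono mult_left_mono \<alpha> exp_norm_bounded_linear_le[OF P cg vc]
        exp_norm_bounded_linear_le[OF Q cg vc])
  also have "\<dots> = V 0 + (IP + \<alpha> * IQ)"
    by (simp add: V_def algebra_simps)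
  also have "IP + \<alpha> * IQ
      = integral {0..s} (\<lambda>r. exp r * norm (P (g r)) + \<alpha> * (exp r * norm (Q (g r))))"
    unfolding IP_def IQ_def
    by (subst integral_add) (auto intro!: integrable_continuous_interval continuous_intros
        cont[OF P cg] cont[OF Q cg])
  also have "\<dots> \<le> integral {0..s} (\<lambda>r. \<kappa> * (exp r * V r))"
    using forcing mult_left_mono[OF forcing, of "exp _"]
    by (intro integral_le) (auto simp: V_def algebra_simps intro!: integrable_continuous_interval
        continuous_intros cont[OF P cg] cont[OF Q cg] cont[OF P cD] cont[OF Q cD])
  finally show ?thesis
    by simp
qed

lemma weighted_norm_diff_contraction:
  fixes P :: "'a::{real_normed_vector,complete_space} \<Rightarrow> 'b::{real_normed_vector,complete_space}"
    and Q :: "'a \<Rightarrow> 'c::{real_normed_vector,complete_space}"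
    and b :: "'a \<Rightarrow> 'a" and Y1 Y2 w :: "real \<Rightarrow> 'a"
  assumes P: "bounded_linear P" and Q: "bounded_linear Q"
    and cb: "continuous_on UNIV b"
    and Bh: "\<And>x y. norm (Q (b x) - Q (b y)) \<le> Hl * norm (P x - P y) + Hh * norm (Q x - Q y)"
    and Bl: "\<And>x y. norm (P (b x) - P (b y)) \<le> Ll * norm (P x - P y) + Lh * norm (Q x - Q y)"
    and coef_l: "Ll + \<alpha> * Hl \<le> \<kappa>" and coef_h: "Lh + \<alpha> * Hh \<le> \<alpha> * \<kappa>"
    and \<kappa>: "0 \<le> \<kappa>" and \<alpha>: "0 \<le> \<alpha>"
    and T: "T \<ge> 0" and c1: "continuous_on {0..T} Y1" and c2: "continuous_on {0..T} Y2"
    and e1: "\<And>s. s \<in> {0..T} \<Longrightarrow> Y1 s = x1 + integral {0..s} (\<lambda>r. - Y1 r + b (Y1 r)) + w s"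
    and e2: "\<And>s. s \<in> {0..T} \<Longrightarrow> Y2 s = x2 + integral {0..s} (\<lambda>r. - Y2 r + b (Y2 r)) + w s"
  shows "norm (P (Y1 T - Y2 T)) + \<alpha> * norm (Q (Y1 T - Y2 T))
     \<le> exp (- (1 - \<kappa>) * T) * (norm (P (x1 - x2)) + \<alpha> * norm (Q (x1 - x2)))"
proof -
  define D where "D s = Y1 s - Y2 s" for s
  define g where "g s = b (Y1 s) - b (Y2 s)" for s
  define V where "V s = norm (P (D s)) + \<alpha> * norm (Q (D s))" for s
  have cD: "continuous_on {0..T} D"
    unfolding D_def by (intro continuous_intros c1 c2)
  have cg: "continuous_on {0..T} g"
    unfolding g_def by (intro continuous_intros continuous_on_compose2[OF cb c1]
        continuous_on_compose2[OF cb c2]) auto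
  have D0: "D 0 = x1 - x2"
    using e1[of 0] e2[of 0] T by (simp add: D_def)
  have forcing: "norm (P (g r)) + \<alpha> * norm (Q (g r)) \<le> \<kappa> * V r" for r
  proof -
    have "norm (P (g r)) + \<alpha> * norm (Q (g r))
        \<le> (Ll + \<alpha> * Hl) * norm (P (D r)) + (Lh + \<alpha> * Hh) * norm (Q (D r))"
      using Bl[of "Y1 r" "Y2 r"] Bh[of "Y1 r" "Y2 r"] mult_left_mono[OF _ \<alpha>]
      by (fastforce simp: g_def D_def linear_diff[OF bounded_linear.linear[OF P]]
          linear_diff[OF bounded_linear.linear[OF Q]] algebra_simps)
    also have "\<dots> \<le> \<kappa> * V r"
      using mult_right_mono[OF coef_l norm_ge_zero, of "P (D r)"]
        mult_right_mono[OF coef_h norm_ge_zero, of "Q (D r)"]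
      by (simp add: V_def algebra_simps)
    finally show ?thesis .
  qed
  have eqD: "D s = D 0 + integral {0..s} (\<lambda>r. - D r + g r)" if s: "s \<in> {0..T}" for s
  proof -
    have "Y1 s - Y2 s = x1 - x2 + integral {0..s} (\<lambda>r. - (Y1 r - Y2 r) + (b (Y1 r) - b (Y2 r)))"
      using s e1[OF s] e2[OF s]
      by (intro additive_noise_solution_diff[where w=w and y=x1 and z=x2, OF cb])
        (auto intro: continuous_on_subset[OF c1] continuous_on_subset[OF c2])
    then show ?thesis
      using D0 by (simp add: D_def g_def)
  qed
  have "exp s * V s \<le> V 0 + \<kappa> * integral {0..s} (\<lambda>r. exp r * V r)" if s: "s \<in> {0..T}" for s
  proof -
    have sub: "{0..s} \<subseteq> {0..T}" using s by auto
    have vc: "exp s *\<^sub>R D s = D 0 + integral {0..s} (\<lambda>r. exp r *\<^sub>R g r)"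
      using s sub by (intro variation_of_constants continuous_on_subset[OF cD sub]
          continuous_on_subset[OF cg sub] eqD) auto
    from exp_weighted_norm_le[OF P Q \<alpha> continuous_on_subset[OF cD sub]
        continuous_on_subset[OF cg sub] this] forcing
    show ?thesis
      by (simp add: V_def)
  qed
  moreover have "continuous_on {0..T} (\<lambda>s. exp s * V s)"
    unfolding V_def by (intro continuous_intros cD
        continuous_on_compose2[OF bounded_linear.continuous_on[OF P continuous_on_id] cD]
        continuous_on_compose2[OF bounded_linear.continuous_on[OF Q continuous_on_id] cD]) auto
  ultimately have "exp T * V T \<le> V 0 * exp (\<kappa> * T)"
    by (intro gronwall_inequality T \<kappa>) auto
  then have "V T \<le> exp (- (1 - \<kappa>) * T) * V 0"
    by (simp add: exp_minus exp_diff field_simps algebra_simps)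
  then show ?thesis
    by (simp add: V_def D_def D0[unfolded D_def])
qed

section \<open>Measurable modifications and synchronous couplings\<close>

lemma measurable_dense_approximation:
  obtains q :: "nat \<Rightarrow> 'a::{metric_space,second_countable_topology}" and idx :: "nat \<Rightarrow> 'a \<Rightarrow> nat"
  where "\<And>m. idx m \<in> measurable borel (count_space UNIV)"
    and "\<And>y. (\<lambda>m. q (idx m y)) \<longlonglongrightarrow> y"
proof -
  obtain D :: "'a set" where "countable D"
    and dense: "\<And>U. open U \<Longrightarrow> U \<noteq> {} \<Longrightarrow> \<exists>d\<in>D. d \<in> U"
    by (erule countable_dense_setE)
  define q where "q = from_nat_into D"
  define idx where "idx m y = (LEAST i. dist y (q i) < 1 / Suc m)" for m y
  have "\<exists>i. dist y (q i) < 1 / Suc m" for y m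
  proof -
    obtain d where "d \<in> D" "d \<in> ball y (1 / Suc m)"
      using dense[of "ball y (1 / Suc m)"] by auto
    then show ?thesis
      unfolding q_def by (metis \<open>countable D\<close> empty_iff from_nat_into_surj mem_ball)
  qed
  then have "dist (q (idx m y)) y < 1 / Suc m" for y m
    unfolding idx_def by (metis (mono_tags, lifting) LeastI_ex dist_commute)
  then have "\<forall>m. dist (q (idx m y)) y \<le> dist (1 / real (Suc m)) 0" for y
    by (simp add: less_imp_le)
  then have "(\<lambda>m. q (idx m y)) \<longlonglongrightarrow> y" for y
    by (intro metric_tendsto_imp_tendsto[OF LIMSEQ_Suc[OF lim_const_over_n[of 1]] always_eventually])
  moreover have "idx m \<in> measurable borel (count_space UNIV)" for m
    unfolding idx_def by measurable
  ultimately show ?thesis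
    using that by blast
qed

text \<open>Off the null set N the field is evaluated at dense points approximating y; on N the index
  is frozen so that every sequence converges and the limit is defined everywhere.\<close>

lemma measurable_lim_dense_evaluation:
  fixes X :: "'a::metric_space \<Rightarrow> 'w \<Rightarrow> 'b::complete_space" and q :: "nat \<Rightarrow> 'a"
  assumes idx_meas: "\<And>m. idx m \<in> measurable borel (count_space UNIV)"
    and q_idx: "\<And>y. (\<lambda>m. q (idx m y)) \<longlonglongrightarrow> y"
    and meas: "\<And>i. X (q i) \<in> borel_measurable M" and N: "N \<in> sets M"
    and uc: "\<And>\<omega>. \<omega> \<in> space M - N \<Longrightarrow> uniformly_continuous_on (range q) (\<lambda>z. X z \<omega>)"
  defines "F \<equiv> \<lambda>m p. X (q (if snd p \<in> N then 0 else idx m (fst p))) (snd p)"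
  shows "(\<lambda>p. lim (\<lambda>m. F m p)) \<in> borel_measurable (borel \<Otimes>\<^sub>M M)"
proof (rule borel_measurable_LIMSEQ_metric)
  show "F m \<in> borel_measurable (borel \<Otimes>\<^sub>M M)" for m
  proof -
    have idx_N: "(\<lambda>p. if snd p \<in> N then 0 else idx m (fst p)) \<in> measurable (borel \<Otimes>\<^sub>M M) (count_space UNIV)"
      using N idx_meas by measurable
    show ?thesis
      unfolding F_def
      by (rule measurable_compose_countable'[where f="\<lambda>i p. X (q i) (snd p)", OF _ idx_N])
        (auto intro: measurable_compose[OF measurable_snd meas])
  qed
  have "Cauchy (\<lambda>m. F m (y, \<omega>))" if "\<omega> \<in> space M" for y \<omega>
  proof (cases "\<omega> \<in> N")
    case False
    from uniformly_continuous_on_Cauchy[OF uc LIMSEQ_imp_Cauchy[OF q_idx]] False that show ?thesis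
      by (simp add: F_def)
  qed (simp add: F_def Cauchy_convergent_iff convergent_const)
  then show "(\<lambda>m. F m p) \<longlonglongrightarrow> lim (\<lambda>m. F m p)" if "p \<in> space (borel \<Otimes>\<^sub>M M)" for p
    using that by (cases p) (auto simp: space_pair_measure Cauchy_convergent_iff convergent_LIMSEQ_iff)
qed

lemma jointly_measurable_modification:
  fixes X :: "'a::{metric_space,second_countable_topology} \<Rightarrow> 'w \<Rightarrow> 'b::complete_space"
  assumes meas: "\<And>y. X y \<in> borel_measurable M"
    and lip: "\<And>x y. AE \<omega> in M. dist (X x \<omega>) (X y \<omega>) \<le> K * dist x y"
    and K: "K \<ge> 0"
  shows "\<exists>Xt \<in> borel_measurable (borel \<Otimes>\<^sub>M M). \<forall>y. AE \<omega> in M. Xt (y, \<omega>) = X y \<omega>"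
proof -
  obtain q :: "nat \<Rightarrow> 'a" and idx where idx_meas: "\<And>m. idx m \<in> measurable borel (count_space UNIV)"
    and q_idx: "\<And>y. (\<lambda>m. q (idx m y)) \<longlonglongrightarrow> y"
    by (rule measurable_dense_approximation) blast
  have "AE \<omega> in M. \<forall>i j. dist (X (q i) \<omega>) (X (q j) \<omega>) \<le> K * dist (q i) (q j)"
    by (simp add: AE_all_countable lip)
  then obtain N where N: "N \<in> null_sets M"
    and lip_N: "\<And>\<omega>. \<omega> \<in> space M - N \<Longrightarrow> K-lipschitz_on (range q) (\<lambda>z. X z \<omega>)"
    by (auto elim!: AE_E intro!: lipschitz_onI K)
  define F where "F m p = X (q (if snd p \<in> N then 0 else idx m (fst p))) (snd p)" for m p
  define Xt where "Xt p = lim (\<lambda>m. F m p)" for p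
  have "Xt \<in> borel_measurable (borel \<Otimes>\<^sub>M M)"
    unfolding Xt_def F_def using lip_N
    by (intro measurable_lim_dense_evaluation[OF idx_meas q_idx meas null_setsD2[OF N]]
        lipschitz_on_uniformly_continuous)
  moreover have "AE \<omega> in M. Xt (y, \<omega>) = X y \<omega>" for y
  proof -
    have "AE \<omega> in M. \<omega> \<notin> N \<and> (\<forall>i. dist (X (q i) \<omega>) (X y \<omega>) \<le> K * dist (q i) y)"
      using AE_not_in[OF N] by (simp add: AE_all_countable lip)
    then show ?thesis
    proof eventually_elim
      case (elim \<omega>)
      have "(\<lambda>m. K * dist (q (idx m y)) y) \<longlonglongrightarrow> 0"
        by (intro tendsto_mult_right_zero q_idx[THEN tendsto_dist_iff[THEN iffD1]])
      moreover have "\<forall>m. dist (F m (y, \<omega>)) (X y \<omega>) \<le> dist (K * dist (q (idx m y)) y) 0"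
        using elim K by (simp add: F_def)
      ultimately have "(\<lambda>m. F m (y, \<omega>)) \<longlonglongrightarrow> X y \<omega>"
        by (rule metric_tendsto_imp_tendsto[OF _ always_eventually])
      then show ?case
        unfolding Xt_def by (rule limI)
    qed
  qed
  ultimately show ?thesis
    by blast
qed

lemma trans_kernel_modification:
  fixes Xt :: "'a::topological_space \<times> 'w \<Rightarrow> 'a"
  assumes mXt: "Xt \<in> borel_measurable (borel \<Otimes>\<^sub>M M)"
    and ae: "AE \<omega> in M. Xt (y, \<omega>) = X y t \<omega>"
    and mX: "X y t \<in> borel_measurable M"
    and A: "A \<in> sets borel"
  shows "trans_kernel M X t y A = emeasure M {\<omega> \<in> space M. Xt (y, \<omega>) \<in> A}"
proof -
  have "(\<lambda>\<omega>. Xt (y, \<omega>)) \<in> borel_measurable M"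
    using mXt by measurable
  with mX A have "Measurable.pred M (\<lambda>\<omega>. X y t \<omega> \<in> A)" "Measurable.pred M (\<lambda>\<omega>. Xt (y, \<omega>) \<in> A)"
    by measurable
  moreover have "AE \<omega> in M. (X y t \<omega> \<in> A) = (Xt (y, \<omega>) \<in> A)"
    using ae by eventually_elim simp
  ultimately show ?thesis
    unfolding trans_kernel_def by (intro emeasure_Collect_eq_AE)
qed

text \<open>Started from an initial point independent of the noise and distributed as
  \<open>distr \<rho> borel \<pi>\<close>, the solution at time t has law \<open>kernel_act M X t (distr \<rho> borel \<pi>)\<close>.\<close>

lemma distr_modification_eq_kernel_act:
  fixes Xt :: "'a::second_countable_topology \<times> 'w \<Rightarrow> 'a"
    and X :: "'a \<Rightarrow> real \<Rightarrow> 'w \<Rightarrow> 'a" and \<pi> :: "'b \<Rightarrow> 'a"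
  assumes M: "prob_space M"
    and mXt: "Xt \<in> borel_measurable (borel \<Otimes>\<^sub>M M)"
    and ae: "\<And>y. AE \<omega> in M. Xt (y, \<omega>) = X y t \<omega>"
    and mX: "\<And>y. X y t \<in> borel_measurable M"
    and mpi: "\<pi> \<in> measurable \<rho> borel"
  shows "distr (\<rho> \<Otimes>\<^sub>M M) borel (\<lambda>p. Xt (\<pi> (fst p), snd p)) = kernel_act M X t (distr \<rho> borel \<pi>)"
proof -
  interpret M: prob_space M by fact
  define G where "G p = Xt (\<pi> (fst p), snd p)" for p
  have mG: "G \<in> borel_measurable (\<rho> \<Otimes>\<^sub>M M)"
    unfolding G_def using mpi mXt by measurable
  define N where "N = distr (\<rho> \<Otimes>\<^sub>M M) borel G"
  have eq: "emeasure N A = (\<integral>\<^sup>+ y. trans_kernel M X t y A \<partial>distr \<rho> borel \<pi>)"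
    if A: "A \<in> sets borel" for A
  proof -
    note kernel = trans_kernel_modification[where X=X and t=t, OF mXt ae mX A]
    have "{p \<in> space (borel \<Otimes>\<^sub>M M). Xt p \<in> A} \<in> sets (borel \<Otimes>\<^sub>M M)"
      using mXt A by measurable
    from M.measurable_emeasure_Pair[OF this]
    have "(\<lambda>y. trans_kernel M X t y A) \<in> borel_measurable borel"
      by (simp add: kernel vimage_def space_pair_measure)
    moreover have "G -` A \<inter> space (\<rho> \<Otimes>\<^sub>M M) \<in> sets (\<rho> \<Otimes>\<^sub>M M)"
      by (rule measurable_sets[OF mG A])
    ultimately show ?thesis
      unfolding N_def using mpi
      by (simp add: emeasure_distr[OF mG A] M.emeasure_pair_measure_alt nn_integral_distr kernel
          G_def space_pair_measure vimage_def conj_commute cong: nn_integral_cong_simp)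
  qed
  have "N = measure_of (space N) (sets N) (emeasure N)"
    by (simp add: measure_of_of_measure)
  also have "\<dots> = measure_of UNIV (sets borel) (emeasure N)"
    by (simp add: N_def)
  also have "\<dots> = measure_of UNIV (sets borel) (\<lambda>A. \<integral>\<^sup>+ y. trans_kernel M X t y A \<partial>distr \<rho> borel \<pi>)"
    using eq by (intro measure_of_eq) (auto simp: sets.sigma_sets_eq[of borel, simplified])
  finally show ?thesis
    unfolding kernel_act_def N_def G_def .
qed

lemma synchronous_coupling:
  fixes Xt :: "'a::second_countable_topology \<times> 'w \<Rightarrow> 'a"
    and X :: "'a \<Rightarrow> real \<Rightarrow> 'w \<Rightarrow> 'a"
  assumes M: "prob_space M"
    and mXt: "Xt \<in> borel_measurable (borel \<Otimes>\<^sub>M M)"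
    and ae: "\<And>y. AE \<omega> in M. Xt (y, \<omega>) = X y t \<omega>"
    and mX: "\<And>y. X y t \<in> borel_measurable M"
    and \<gamma>: "\<gamma> \<in> couplings \<mu> \<nu>"
  defines "H \<equiv> \<lambda>p. (Xt (fst (fst p), snd p), Xt (snd (fst p), snd p))"
  shows "H \<in> measurable (\<gamma> \<Otimes>\<^sub>M M) borel"
    and "distr (\<gamma> \<Otimes>\<^sub>M M) borel H \<in> couplings (kernel_act M X t \<mu>) (kernel_act M X t \<nu>)"
proof -
  have g: "prob_space \<gamma>" "sets \<gamma> = sets borel"
    "distr \<gamma> borel fst = \<mu>" "distr \<gamma> borel snd = \<nu>"
    using \<gamma> by (simp_all add: couplings_def borel_probs_def)
  have sg: "sets \<gamma> = sets (borel \<Otimes>\<^sub>M borel)"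
    using g(2) by (simp only: borel_prod)
  have m\<gamma>: "fst \<in> measurable \<gamma> borel" "snd \<in> measurable \<gamma> borel"
    by (simp_all add: measurable_cong_sets[OF sg refl])
  have mBorel: "fst \<in> measurable (borel :: ('a \<times> 'a) measure) borel"
    "snd \<in> measurable (borel :: ('a \<times> 'a) measure) borel"
    by (simp_all flip: borel_prod)
  show mH: "H \<in> measurable (\<gamma> \<Otimes>\<^sub>M M) borel"
    unfolding H_def borel_prod[symmetric]
    by (intro measurable_Pair measurable_compose[OF _ mXt]
        measurable_compose[OF measurable_fst m\<gamma>(1)] measurable_compose[OF measurable_fst m\<gamma>(2)]) auto
  have marginal: "distr (distr (\<gamma> \<Otimes>\<^sub>M M) borel H) borel f = kernel_act M X t (distr \<gamma> borel \<pi>)"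
    if "f \<in> measurable borel borel" "\<pi> \<in> measurable \<gamma> borel"
      "\<And>p. f (H p) = Xt (\<pi> (fst p), snd p)" for f \<pi>
    using distr_distr[OF that(1) mH] distr_modification_eq_kernel_act[where X=X and t=t, OF M mXt ae mX that(2)]
    by (simp add: o_def that(3))
  show "distr (\<gamma> \<Otimes>\<^sub>M M) borel H \<in> couplings (kernel_act M X t \<mu>) (kernel_act M X t \<nu>)"
    unfolding couplings_def borel_probs_def
    using marginal[OF mBorel(1) m\<gamma>(1)] marginal[OF mBorel(2) m\<gamma>(2)] g(3,4)
      prob_space.prob_space_distr[OF prob_space_pair[OF g(1) M] mH]
    by (simp add: H_def)
qed

lemma wasserstein_kernel_act_le_coupling:
  fixes Xt :: "'a::second_countable_topology \<times> 'w \<Rightarrow> 'a"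
    and X :: "'a \<Rightarrow> real \<Rightarrow> 'w \<Rightarrow> 'a" and d :: "'a \<Rightarrow> 'a \<Rightarrow> real"
  assumes M: "prob_space M"
    and mXt: "Xt \<in> borel_measurable (borel \<Otimes>\<^sub>M M)"
    and ae: "\<And>y. AE \<omega> in M. Xt (y, \<omega>) = X y t \<omega>"
    and mX: "\<And>y. X y t \<in> borel_measurable M"
    and md: "(\<lambda>z. d (fst z) (snd z)) \<in> borel_measurable borel"
    and contr: "\<And>x y. AE \<omega> in M. d (Xt (x, \<omega>)) (Xt (y, \<omega>)) \<le> r * d x y"
    and r: "r \<ge> 0"
    and \<gamma>: "\<gamma> \<in> couplings \<mu> \<nu>"
  shows "wasserstein d (kernel_act M X t \<mu>) (kernel_act M X t \<nu>)
     \<le> ennreal r * (\<integral>\<^sup>+ z. ennreal (d (fst z) (snd z)) \<partial>\<gamma>)"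
proof -
  interpret M: prob_space M by fact
  define H where "H p = (Xt (fst (fst p), snd p), Xt (snd (fst p), snd p))" for p :: "('a \<times> 'a) \<times> 'w"
  note coupling = synchronous_coupling[where X=X and t=t, OF M mXt ae mX \<gamma>, folded H_def]
  have md': "(\<lambda>z. ennreal (d (fst z) (snd z))) \<in> borel_measurable borel"
    using md by measurable
  have "wasserstein d (kernel_act M X t \<mu>) (kernel_act M X t \<nu>)
      \<le> (\<integral>\<^sup>+ z. ennreal (d (fst z) (snd z)) \<partial>distr (\<gamma> \<Otimes>\<^sub>M M) borel H)"
    unfolding wasserstein_def by (rule INF_lower[OF coupling(2)])
  also have "\<dots> = (\<integral>\<^sup>+ z. \<integral>\<^sup>+ \<omega>. ennreal (d (Xt (fst z, \<omega>)) (Xt (snd z, \<omega>))) \<partial>M \<partial>\<gamma>)"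
  proof -
    have "(\<lambda>p. ennreal (d (Xt (fst (fst p), snd p)) (Xt (snd (fst p), snd p))))
        \<in> borel_measurable (\<gamma> \<Otimes>\<^sub>M M)"
      using measurable_compose[OF coupling(1) md'] by (simp add: H_def)
    from M.nn_integral_fst[OF this] show ?thesis
      by (subst nn_integral_distr[OF coupling(1)]) (simp_all add: md' H_def)
  qed
  also have "\<dots> \<le> (\<integral>\<^sup>+ z. ennreal r * ennreal (d (fst z) (snd z)) \<partial>\<gamma>)"
  proof (rule nn_integral_mono)
    fix z :: "'a \<times> 'a"
    have "(\<integral>\<^sup>+ \<omega>. ennreal (d (Xt (fst z, \<omega>)) (Xt (snd z, \<omega>))) \<partial>M)
        \<le> (\<integral>\<^sup>+ \<omega>. ennreal (r * d (fst z) (snd z)) \<partial>M)"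
      using contr[of "fst z" "snd z"] by (intro nn_integral_mono_AE) (auto elim!: eventually_mono intro: ennreal_leI)
    then show "(\<integral>\<^sup>+ \<omega>. ennreal (d (Xt (fst z, \<omega>)) (Xt (snd z, \<omega>))) \<partial>M)
        \<le> ennreal r * ennreal (d (fst z) (snd z))"
      using r by (simp add: M.emeasure_space_1 ennreal_mult')
  qed
  also have "\<dots> = ennreal r * (\<integral>\<^sup>+ z. ennreal (d (fst z) (snd z)) \<partial>\<gamma>)"
  proof (rule nn_integral_cmult)
    have "sets \<gamma> = sets borel"
      using \<gamma> by (simp add: couplings_def borel_probs_def)
    then show "(\<lambda>z. ennreal (d (fst z) (snd z))) \<in> borel_measurable \<gamma>"
      by (subst measurable_cong_sets[OF _ refl]) (use md' in auto)
  qed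
  finally show ?thesis .
qed

lemma wasserstein_kernel_act_contraction:
  fixes X :: "'a::{complete_space,second_countable_topology} \<Rightarrow> real \<Rightarrow> 'w \<Rightarrow> 'a"
    and d :: "'a \<Rightarrow> 'a \<Rightarrow> real"
  assumes M: "prob_space M" and mX: "\<And>y. X y t \<in> borel_measurable M"
    and d_cont: "continuous_on UNIV (\<lambda>z. d (fst z) (snd z))"
    and dist_le_d: "\<And>x y. dist x y \<le> d x y" and d_le_dist: "\<And>x y. d x y \<le> K * dist x y"
    and contr: "\<And>x y. AE \<omega> in M. d (X x t \<omega>) (X y t \<omega>) \<le> r * d x y" and r: "r > 0"
  shows "wasserstein d (kernel_act M X t \<mu>) (kernel_act M X t \<nu>) \<le> ennreal r * wasserstein d \<mu> \<nu>"
proof -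
  have "AE \<omega> in M. dist (X x t \<omega>) (X y t \<omega>) \<le> (r * max K 0) * dist x y" for x y
    using contr[of x y]
  proof eventually_elim
    case (elim \<omega>)
    have "d x y \<le> max K 0 * dist x y"
      using d_le_dist[of x y] by (smt (verit) mult_right_mono zero_le_dist)
    with elim r show ?case
      using dist_le_d[of "X x t \<omega>" "X y t \<omega>"] by (smt (verit) mult_left_mono mult.assoc)
  qed
  from jointly_measurable_modification[where X="\<lambda>y. X y t", OF mX this] r
  obtain Xt where mXt: "Xt \<in> borel_measurable (borel \<Otimes>\<^sub>M M)"
    and ae: "\<And>y. AE \<omega> in M. Xt (y, \<omega>) = X y t \<omega>"
    by auto
  have contrXt: "AE \<omega> in M. d (Xt (x, \<omega>)) (Xt (y, \<omega>)) \<le> r * d x y" for x y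
    using ae[of x] ae[of y] contr[of x y] by eventually_elim simp
  define LHS where "LHS = wasserstein d (kernel_act M X t \<mu>) (kernel_act M X t \<nu>)"
  have inv_r: "ennreal (1 / r) * ennreal r = 1"
    using r by (simp flip: ennreal_mult)
  have "ennreal (1 / r) * LHS \<le> wasserstein d \<mu> \<nu>"
    unfolding wasserstein_def
  proof (rule INF_greatest)
    fix \<gamma> assume "\<gamma> \<in> couplings \<mu> \<nu>"
    from wasserstein_kernel_act_le_coupling[where X=X and t=t, OF M mXt ae mX
        borel_measurable_continuous_onI[OF d_cont] contrXt less_imp_le[OF r] this]
    have "LHS \<le> ennreal r * (\<integral>\<^sup>+ z. ennreal (d (fst z) (snd z)) \<partial>\<gamma>)"
      unfolding LHS_def .
    then show "ennreal (1 / r) * LHS \<le> (\<integral>\<^sup>+ z. ennreal (d (fst z) (snd z)) \<partial>\<gamma>)"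
      by (metis inv_r mult.assoc mult_1 mult_left_mono zero_le)
  qed
  then have "ennreal r * (ennreal (1 / r) * LHS) \<le> ennreal r * wasserstein d \<mu> \<nu>"
    by (rule mult_left_mono) simp
  then show ?thesis
    unfolding LHS_def by (metis inv_r mult.assoc mult.commute mult_1)
qed

section \<open>The weighted norm of (A1)\<close>

lemma bounded_linear_low_proj: "bounded_linear (low_proj e n)"
  unfolding low_proj_def
  by (intro bounded_linear_sum bounded_linear_compose[OF bounded_linear_scaleR_left bounded_linear_inner_left])

lemma bounded_linear_high_proj: "bounded_linear (high_proj e n)"
  unfolding high_proj_def
  by (intro bounded_linear_sub bounded_linear_ident bounded_linear_low_proj)

lemma norm_le_alpha_norm:
  assumes "1 \<le> \<alpha>"
  shows "norm x \<le> alpha_norm e n \<alpha> x"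
proof -
  have "norm x \<le> norm (low_proj e n x) + norm (high_proj e n x)"
    using norm_triangle_ineq[of "low_proj e n x" "high_proj e n x"] by (simp add: high_proj_def)
  also have "\<dots> \<le> alpha_norm e n \<alpha> x"
    using assms by (simp add: alpha_norm_def mult_le_cancel_right1)
  finally show ?thesis .
qed

lemma alpha_norm_le_norm:
  assumes "0 \<le> \<alpha>"
  obtains K where "\<And>x. alpha_norm e n \<alpha> x \<le> K * norm x"
proof -
  obtain KP where KP: "\<And>x. norm (low_proj e n x) \<le> norm x * KP"
    using bounded_linear.bounded[OF bounded_linear_low_proj] by blast
  obtain KQ where KQ: "\<And>x. norm (high_proj e n x) \<le> norm x * KQ"
    using bounded_linear.bounded[OF bounded_linear_high_proj] by blast
  have "alpha_norm e n \<alpha> x \<le> (KP + \<alpha> * KQ) * norm x" for x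
    using KP[of x] mult_left_mono[OF KQ[of x] assms] by (simp add: alpha_norm_def algebra_simps)
  then show ?thesis
    by (rule that)
qed

lemma continuous_on_alpha_norm_diff:
  "continuous_on UNIV (\<lambda>z. alpha_norm e n \<alpha> (fst z - snd z))"
  unfolding alpha_norm_def
  by (intro continuous_intros
      linear_continuous_on[OF bounded_linear_low_proj, THEN continuous_on_compose2]
      linear_continuous_on[OF bounded_linear_high_proj, THEN continuous_on_compose2]) auto

lemma alpha_norm_solution_contraction:
  fixes b :: "'a::{real_inner,complete_space} \<Rightarrow> 'a"
  assumes cb: "continuous_on UNIV b"
    and A1h: "\<And>x y. norm (high_proj e n (b x) - high_proj e n (b y))
               \<le> H_l * norm (low_proj e n x - low_proj e n y) + H_h * norm (high_proj e n x - high_proj e n y)"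
    and A1l: "\<And>x y. norm (low_proj e n (b x) - low_proj e n (b y))
               \<le> L_l * norm (low_proj e n x - low_proj e n y) + L_h * norm (high_proj e n x - high_proj e n y)"
    and coef_l: "L_l + \<alpha> * H_l \<le> \<kappa>" and coef_h: "L_h + \<alpha> * H_h \<le> \<alpha> * \<kappa>"
    and \<kappa>: "0 \<le> \<kappa>" and \<alpha>: "0 \<le> \<alpha>" and t: "0 \<le> t"
    and sol_x: "is_solution M b W x X" and sol_y: "is_solution M b W y Y"
  shows "AE \<omega> in M. alpha_norm e n \<alpha> (X t \<omega> - Y t \<omega>) \<le> exp (- (1 - \<kappa>) * t) * alpha_norm e n \<alpha> (x - y)"
proof -
  have "AE \<omega> in M. continuous_on {0..} (\<lambda>s. Z s \<omega>) \<and>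
      (\<forall>s\<ge>0. Z s \<omega> = z + integral {0..s} (\<lambda>r. - Z r \<omega> + b (Z r \<omega>)) + sqrt 2 *\<^sub>R W s \<omega>)"
    if "is_solution M b W z Z" for z Z
    using that by (simp add: is_solution_def)
  from this[OF sol_x] this[OF sol_y] show ?thesis
  proof eventually_elim
    case (elim \<omega>)
    show ?case
      unfolding alpha_norm_def
    proof (rule weighted_norm_diff_contraction[OF bounded_linear_low_proj bounded_linear_high_proj cb
          A1h A1l coef_l coef_h \<kappa> \<alpha> t])
      show "continuous_on {0..t} (\<lambda>s. X s \<omega>)" "continuous_on {0..t} (\<lambda>s. Y s \<omega>)"
        using elim by (auto intro: continuous_on_subset)
    qed (use elim in auto)
  qed
qed

lemma A1_rate_constants:
  fixes L_l L_h H_l H_h :: real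
  assumes "0 \<le> H_h" "H_h < 1" "0 \<le> L_h"
    and \<alpha>: "\<alpha> = (1 + L_h) / (1 - H_h)" and \<beta>_neg: "\<alpha> * H_l + L_l - 1 < 0"
    and c: "c = min (1 / \<alpha>) \<bar>\<alpha> * H_l + L_l - 1\<bar>"
  shows "1 \<le> \<alpha>" "0 < c" "c \<le> 1" "L_l + \<alpha> * H_l \<le> 1 - c" "L_h + \<alpha> * H_h \<le> \<alpha> * (1 - c)"
proof -
  show \<alpha>1: "1 \<le> \<alpha>"
    using assms(1-3) by (simp add: \<alpha> field_simps)
  show "0 < c"
    using \<alpha>1 \<beta>_neg by (simp add: c)
  have "c \<le> 1 / \<alpha>"
    by (simp add: c)
  then have c\<alpha>: "c * \<alpha> \<le> 1"
    using \<alpha>1 by (simp add: field_simps)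
  then show "c \<le> 1"
    using \<alpha>1 \<open>0 < c\<close> by (smt (verit) mult_le_cancel_left1)
  show "L_l + \<alpha> * H_l \<le> 1 - c"
    using \<beta>_neg by (simp add: c)
  have "\<alpha> * (1 - H_h) = 1 + L_h"
    using assms(2) by (simp add: \<alpha>)
  with c\<alpha> show "L_h + \<alpha> * H_h \<le> \<alpha> * (1 - c)"
    by (simp add: algebra_simps)
qed

lemma continuous_on_if_norm_diff_le:
  fixes f :: "'a::real_normed_vector \<Rightarrow> 'b::real_normed_vector"
  assumes "\<exists>L. \<forall>x y. norm (f x - f y) \<le> L * norm (x - y)"
  shows "continuous_on UNIV f"
proof -
  obtain L where L: "\<And>x y. norm (f x - f y) \<le> L * norm (x - y)"
    using assms by blast
  show ?thesis
  proof (rule lipschitz_on_continuous_on)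
    show "(max L 0)-lipschitz_on UNIV f"
    proof (rule lipschitz_onI)
      show "dist (f x) (f y) \<le> max L 0 * dist x y" for x y
        using L[of x y] mult_right_mono[OF max.cobounded1[of L 0] norm_ge_zero[of "x - y"]]
        by (simp add: dist_norm)
    qed simp
  qed
qed

theorem mainTheorem2:
  fixes e :: "nat \<Rightarrow> 'a::{real_inner,complete_space,second_countable_topology}"
    and G :: "'a \<Rightarrow> 'a" and lam :: "nat \<Rightarrow> real"
    and b :: "'a \<Rightarrow> 'a" and n :: nat
    and M :: "'w measure" and B :: "nat \<Rightarrow> real \<Rightarrow> 'w \<Rightarrow> real"
    and X :: "'a \<Rightarrow> real \<Rightarrow> 'w \<Rightarrow> 'a"
    and L_l L_h H_l H_h :: real
    and \<mu> \<nu> :: "'a measure" and t :: real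
  assumes onb: "orthonormal_basis e"
    and G_op: "bounded_linear G" "\<forall>x y. inner (G x) y = inner x (G y)" "\<forall>k. G (e k) = lam k *\<^sub>R e k"
    and lam_nonneg: "\<forall>k. lam k \<ge> 0" and lam_sum: "summable lam"
    and b_lip: "\<exists>L. \<forall>x y. norm (b x - b y) \<le> L * norm (x - y)"
    and n_pos: "n \<ge> 1"
    and BMs: "indep_BMs M B"
    and sol: "\<forall>x. is_solution M b (G_wiener lam e B) x (X x)"
    and const_bounds: "0 \<le> H_h" "H_h < 1" "0 \<le> L_l" "0 \<le> L_h" "0 \<le> H_l"
    and A1h: "\<forall>x y. norm (high_proj e n (b x) - high_proj e n (b y))
               \<le> H_l * norm (low_proj e n x - low_proj e n y) + H_h * norm (high_proj e n x - high_proj e n y)"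
    and A1l: "\<forall>x y. norm (low_proj e n (b x) - low_proj e n (b y))
               \<le> L_l * norm (low_proj e n x - low_proj e n y) + L_h * norm (high_proj e n x - high_proj e n y)"
    and beta_neg: "((1 + L_h) / (1 - H_h)) * H_l + L_l - 1 < 0"
    and mu: "\<mu> \<in> P1" and nu: "\<nu> \<in> P1" and t: "t \<ge> 0"
  shows "let \<alpha> = (1 + L_h) / (1 - H_h);
             \<beta> = \<alpha> * H_l + L_l - 1;
             c = min (1 / \<alpha>) \<bar>\<beta>\<bar>;
             d1 = (\<lambda>x y. alpha_norm e n \<alpha> (x - y))
         in wasserstein d1 (kernel_act M X t \<mu>) (kernel_act M X t \<nu>)
              \<le> ennreal (exp (- c * t)) * wasserstein d1 \<mu> \<nu>"
proof -
  define \<alpha> where "\<alpha> = (1 + L_h) / (1 - H_h)"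
  define c where "c = min (1 / \<alpha>) \<bar>\<alpha> * H_l + L_l - 1\<bar>"
  define d1 where "d1 = (\<lambda>x y. alpha_norm e n \<alpha> (x - y))"
  note rate = A1_rate_constants[OF const_bounds(1,2,4) \<alpha>_def beta_neg[folded \<alpha>_def] c_def]
  have cb: "continuous_on UNIV b"
    using b_lip by (rule continuous_on_if_norm_diff_le)
  have contr: "AE \<omega> in M. d1 (X x t \<omega>) (X y t \<omega>) \<le> exp (- c * t) * d1 x y" for x y
    using alpha_norm_solution_contraction[OF cb A1h[rule_format] A1l[rule_format] rate(4,5) _ _ t
        sol[rule_format] sol[rule_format]] rate
    by (simp add: d1_def)
  obtain K where K: "\<And>x. alpha_norm e n \<alpha> x \<le> K * norm x"
    using alpha_norm_le_norm[of \<alpha>] rate(1) by auto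
  have "wasserstein d1 (kernel_act M X t \<mu>) (kernel_act M X t \<nu>)
      \<le> ennreal (exp (- c * t)) * wasserstein d1 \<mu> \<nu>"
  proof (rule wasserstein_kernel_act_contraction[where X=X and t=t and d=d1, OF _ _ _ _ _ contr])
    show "prob_space M"
      using BMs by (simp add: indep_BMs_def)
    show "X y t \<in> borel_measurable M" for y
      using sol t by (simp add: is_solution_def)
    show "dist x y \<le> d1 x y" "d1 x y \<le> K * dist x y" for x y
      using norm_le_alpha_norm[OF rate(1)] K by (simp_all add: d1_def dist_norm)
  qed (simp_all add: d1_def continuous_on_alpha_norm_diff)
  then show ?thesis
    by (simp add: Let_def \<alpha>_def c_def d1_def)
qed

end
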